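(* Let $P$ be a finite set of points in $\mathbb{R}^2$ with transmission radii $r(p)>0$, and let $t\in\mathbb{R}^2$. Let $\Gamma_1(t),\ldots,\Gamma_6(t)$ be the six canonical cones of $t$. For $i=1,\ldots,6$, let $Q_i(t)$ be the set of points $p\in P$ with $|pt|\le r(p)$ that are assigned to $\Gamma_i(t)$ (each such point lies in some cone; a point on a boundary between cones is assigned to one of them arbitrarily), and if $Q_i(t)\ne\emptyset$ let $q_i(t)$ be a point of $Q_i(t)$ of minimum transmission radius. Let $Q(t)$ be the set of (at most six) points $q_i(t)$ so obtained. Let $s\in P$ be a point that can reach $t$, and let $d^*(s,t):=\min_{q\in Q(t)}d_{\mathrm{hop}}(s,q)+1$. Then $d_{\mathrm{hop}}(s,t)\le d^*(s,t)\le d_{\mathrm{hop}}(s,t)+1$.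
   Context: The transmission graph $\mathcal{G}_{\mathrm{tr}}(P)$ is the directed graph on $P$ with arc $(p,q)$ iff $|pq|\le r(p)$. For $p,q\in P$, $d_{\mathrm{hop}}(p,q)$ is the minimum number of arcs on a directed path from $p$ to $q$ in $\mathcal{G}_{\mathrm{tr}}(P)$ ($0$ if $p=q$, $\infty$ if no path exists). For $s\in P$ and $t\in\mathbb{R}^2$, $d_{\mathrm{hop}}(s,t):=\min\{d_{\mathrm{hop}}(s,q)+1 : q\in P,\ |qt|\le r(q)\}$, and $s$ can reach $t$ if this is finite. The canonical cones of a point $x$ are the six closed $60$-degree cones with apex $x$ obtained by partitioning the plane around $x$ with a fixed orientation (the same six directions for every apex). *)

theory Defs
  imports Complex_Main "HOL-Library.Extended_Nat"
begin

definition tr_arcs :: "complex set \<Rightarrow> (complex \<Rightarrow> real) \<Rightarrow> (complex \<times> complex) set" where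
  "tr_arcs P r = {(p, q). p \<in> P \<and> q \<in> P \<and> dist p q \<le> r p}"

text \<open>Minimum number of arcs on a directed path (infinity if none; 0 if p = q).\<close>
definition dhop :: "complex set \<Rightarrow> (complex \<Rightarrow> real) \<Rightarrow> complex \<Rightarrow> complex \<Rightarrow> enat" where
  "dhop P r p q = (INF n \<in> {n. (p, q) \<in> tr_arcs P r ^^ n}. enat n)"

definition dhop_pt :: "complex set \<Rightarrow> (complex \<Rightarrow> real) \<Rightarrow> complex \<Rightarrow> complex \<Rightarrow> enat" where
  "dhop_pt P r s t = (INF q \<in> {q \<in> P. dist q t \<le> r q}. dhop P r s q + 1)"

text \<open>Canonical cone i (i = 0..5) with apex x: closed cone between directions
  i*pi/3 and (i+1)*pi/3.\<close>
definition canon_cone :: "complex \<Rightarrow> nat \<Rightarrow> complex set" where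
  "canon_cone x i = {x + complex_of_real \<rho> * cis \<theta> | \<rho> \<theta>.
      0 \<le> \<rho> \<and> real i * pi / 3 \<le> \<theta> \<and> \<theta> \<le> real (Suc i) * pi / 3}"

end

theory Submission
  imports Defs
begin

text \<open>Two points in a common 60-degree cone with apex \<open>t\<close> are no farther apart than the farther
  of them is from \<open>t\<close>. So if \<open>q'\<close> is the last relay of a shortest route to \<open>t\<close>, it reaches the
  representative \<open>q\<^sub>i(t)\<close> of its own cone: \<open>|q' q\<^sub>i(t)| \<le> max |q' t| |q\<^sub>i(t) t| \<le> r(q')\<close>, the last
  step because \<open>q\<^sub>i(t)\<close> has the minimum radius in that cone. This costs at most one extra hop.
  The lower bound holds because every \<open>q\<^sub>i(t)\<close> reaches \<open>t\<close> itself.\<close>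

lemma norm_cis_diff_le_max:
  fixes a b u v :: real
  assumes "0 \<le> a" "0 \<le> b" "\<bar>u - v\<bar> \<le> pi / 3"
  shows "norm (of_real a * cis u - of_real b * cis v) \<le> max a b"
proof -
  have "cos (pi / 3) \<le> cos \<bar>u - v\<bar>"
    using assms(3) by (intro cos_monotone_0_pi_le) auto
  then have cos_ge: "1 / 2 \<le> cos (u - v)"
    by (simp add: cos_60)
  have "(norm (of_real a * cis u - of_real b * cis v))\<^sup>2
      = (a * cos u - b * cos v)\<^sup>2 + (a * sin u - b * sin v)\<^sup>2"
    by (simp add: cmod_power2)
  also have "\<dots> = a\<^sup>2 * ((cos u)\<^sup>2 + (sin u)\<^sup>2) + b\<^sup>2 * ((cos v)\<^sup>2 + (sin v)\<^sup>2)
      - 2 * a * b * (cos u * cos v + sin u * sin v)"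
    by (simp only: power2_diff power_mult_distrib distrib_left) (simp only: algebra_simps)
  also have "\<dots> = a\<^sup>2 + b\<^sup>2 - 2 * a * b * cos (u - v)"
    by (simp only: sin_cos_squared_add2 mult_1_right cos_diff)
  also have "\<dots> \<le> a\<^sup>2 + b\<^sup>2 - a * b"
    using mult_left_mono[OF cos_ge, of "2 * a * b"] assms(1,2) by simp
  also have "\<dots> \<le> (max a b)\<^sup>2"
    using assms(1,2) mult_left_mono[of a b a] mult_right_mono[of b a b]
    by (auto simp: power2_eq_square max_def)
  finally show ?thesis
    by (rule power2_le_imp_le) (use assms(1) in simp)
qed

lemma canon_cone_dist_le_max:
  assumes "p \<in> canon_cone t i" "x \<in> canon_cone t i"
  shows "dist p x \<le> max (dist p t) (dist x t)"
proof -
  obtain a u where p: "p = t + of_real a * cis u" "0 \<le> a"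
    and u: "real i * pi / 3 \<le> u" "u \<le> real (Suc i) * pi / 3"
    using assms(1) unfolding canon_cone_def by blast
  obtain b v where x: "x = t + of_real b * cis v" "0 \<le> b"
    and v: "real i * pi / 3 \<le> v" "v \<le> real (Suc i) * pi / 3"
    using assms(2) unfolding canon_cone_def by blast
  have "real (Suc i) * pi / 3 = real i * pi / 3 + pi / 3"
    by (simp add: field_simps)
  then have "\<bar>u - v\<bar> \<le> pi / 3"
    using u v by linarith
  then have "norm (of_real a * cis u - of_real b * cis v) \<le> max a b"
    using p(2) x(2) by (rule norm_cis_diff_le_max[rotated 2])
  moreover have "dist p t = a" "dist x t = b"
    using p x by (simp_all add: dist_norm norm_mult)
  ultimately show ?thesis
    using p(1) x(1) by (simp add: dist_norm)
qed

lemma dhop_le_of_relpow: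
  assumes "(p, q) \<in> tr_arcs P r ^^ n"
  shows "dhop P r p q \<le> enat n"
  unfolding dhop_def using assms by (intro INF_lower) simp

lemma dhop_finiteE:
  assumes "dhop P r p q \<noteq> \<infinity>"
  obtains n where "(p, q) \<in> tr_arcs P r ^^ n" "dhop P r p q = enat n"
proof -
  obtain n0 where n0: "n0 \<in> {n. (p, q) \<in> tr_arcs P r ^^ n}"
    using assms unfolding dhop_def
    by (cases "{n. (p, q) \<in> tr_arcs P r ^^ n} = {}") (auto simp: top_enat_def)
  have "dhop P r p q \<in> enat ` {n. (p, q) \<in> tr_arcs P r ^^ n}"
    unfolding dhop_def by (rule wellorder_InfI[OF imageI[OF n0]])
  then show thesis
    using that by auto
qed

lemma dhop_arc_le:
  assumes "(q, q') \<in> tr_arcs P r"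
  shows "dhop P r s q' \<le> dhop P r s q + 1"
proof (cases "dhop P r s q = \<infinity>")
  case False
  then obtain n where "(s, q) \<in> tr_arcs P r ^^ n" "dhop P r s q = enat n"
    by (rule dhop_finiteE)
  moreover from this(1) have "dhop P r s q' \<le> enat (Suc n)"
    using assms by (intro dhop_le_of_relpow relpow_Suc_I)
  ultimately show ?thesis
    by (simp add: eSuc_enat[symmetric] plus_1_eSuc)
qed simp

lemma dhop_pt_attained:
  assumes "dhop_pt P r s t \<noteq> \<infinity>"
  obtains q where "q \<in> P" "dist q t \<le> r q" "dhop_pt P r s t = dhop P r s q + 1"
proof -
  obtain q0 where q0: "q0 \<in> {q \<in> P. dist q t \<le> r q}"
    using assms unfolding dhop_pt_def
    by (cases "{q \<in> P. dist q t \<le> r q} = {}") (auto simp: top_enat_def)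
  have "dhop_pt P r s t \<in> (\<lambda>q. dhop P r s q + 1) ` {q \<in> P. dist q t \<le> r q}"
    unfolding dhop_pt_def by (rule wellorder_InfI[OF imageI[OF q0]])
  then show thesis
    using that by auto
qed

theorem mainTheorem6:
  fixes P :: "complex set" and r :: "complex \<Rightarrow> real" and t s :: complex
    and a :: "complex \<Rightarrow> nat" and q :: "nat \<Rightarrow> complex"
  assumes "finite P"
    and "\<forall>p\<in>P. r p > 0"
    and "\<forall>p\<in>P. dist p t \<le> r p \<longrightarrow> a p < 6 \<and> p \<in> canon_cone t (a p)"
    and "\<forall>i<6. {p \<in> P. dist p t \<le> r p \<and> a p = i} \<noteq> {} \<longrightarrow>
           q i \<in> {p \<in> P. dist p t \<le> r p \<and> a p = i} \<and>
           (\<forall>p \<in> {p \<in> P. dist p t \<le> r p \<and> a p = i}. r (q i) \<le> r p)"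
    and "s \<in> P"
    and "dhop_pt P r s t \<noteq> \<infinity>"
  shows "dhop_pt P r s t \<le> (INF x \<in> {q i | i. i < 6 \<and> {p \<in> P. dist p t \<le> r p \<and> a p = i} \<noteq> {}}. dhop P r s x + 1)
       \<and> (INF x \<in> {q i | i. i < 6 \<and> {p \<in> P. dist p t \<le> r p \<and> a p = i} \<noteq> {}}. dhop P r s x + 1) \<le> dhop_pt P r s t + 1"
proof
  let ?Q = "{q i | i. i < 6 \<and> {p \<in> P. dist p t \<le> r p \<and> a p = i} \<noteq> {}}"
  show "dhop_pt P r s t \<le> (INF x \<in> ?Q. dhop P r s x + 1)"
    unfolding dhop_pt_def using assms(4) by (intro INF_superset_mono) auto
  obtain q' where q': "q' \<in> P" "dist q' t \<le> r q'" and opt: "dhop_pt P r s t = dhop P r s q' + 1"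
    using assms(6) by (rule dhop_pt_attained)
  define i where "i = a q'"
  have i: "i < 6" "q' \<in> canon_cone t i" "{p \<in> P. dist p t \<le> r p \<and> a p = i} \<noteq> {}"
    using assms(3) q' unfolding i_def by auto
  then have qi: "q i \<in> P" "dist (q i) t \<le> r (q i)" "a (q i) = i" "r (q i) \<le> r q'"
    using assms(4) q' unfolding i_def by auto
  have "dist q' (q i) \<le> max (dist q' t) (dist (q i) t)"
    using i(2) assms(3) qi(1-3) by (intro canon_cone_dist_le_max) auto
  also have "\<dots> \<le> r q'"
    using q'(2) qi(2,4) by simp
  finally have "(q', q i) \<in> tr_arcs P r"
    using q'(1) qi(1) unfolding tr_arcs_def by simp
  then have "dhop P r s (q i) + 1 \<le> dhop_pt P r s t + 1"
    unfolding opt by (intro add_right_mono dhop_arc_le)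
  moreover have "q i \<in> ?Q"
    using i(1,3) by blast
  ultimately show "(INF x \<in> ?Q. dhop P r s x + 1) \<le> dhop_pt P r s t + 1"
    by (meson INF_lower2)
qed

end
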